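(* Let $G$ be a simple 2-connected plane graph whose unbounded face $p_\infty$ has $V_\infty$ vertices. Let $(a,b)$ be an admissible state such that (1) there is a bounded face $p$ and an edge $vv'$ lying on the boundary of both $p$ and $p_\infty$ with $b_v=b_{v'}=0$ and $(b_v-b_p)(b_{v'}-b_p)=1$; (2) $a_{p'}+b_{p'}=0$ for every bounded face $p'$; (3) $(b_{v_1}-b_{p'})(b_{v_2}-b_{p'})=0$ for every bounded face $p'$ and every edge $v_1v_2$ of $p'$ that does not lie on the boundary of $p_\infty$. Then $b_w\ge-1$ for every vertex $w$, $a_{p'}=1$ for every bounded face $p'$, and $B(a,b)\ge V_\infty-2$. Moreover $B(a,b)=V_\infty-2$ if and only if $b_w=0$ for every vertex $w$ on $p_\infty$, $b_w=-1$ for every other vertex $w$, and $a_{p'}=1$ for every bounded face $p'$.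
   Context: A simple 2-connected plane graph $G$ is a simple 2-connected planar graph with a fixed embedding in the plane, so every face is bounded by a cycle. For a face $p$, $l(p)$ is the number of edges on its boundary and $v\in p$ means $v$ lies on the boundary of $p$. An admissible state $(a,b)$ assigns an integer $a_p$ to each bounded face $p$ and an integer $b_v$ to each vertex $v$ such that $a_p+b_v\ge 0$ whenever $p$ is bounded and $v\in p$, and $b_v\ge0$ for every vertex $v$ on $p_\infty$. For a bounded face $p$, $b_p=\min_{v\in p}b_v$. $B(a,b)=2\sum_{v}b_v+\sum_p (l(p)-2)a_p$, with $p$ over bounded faces and $v$ over all vertices. *)

theory Defs
  imports Main
begin

text \<open>Combinatorial model of a plane graph (Mohar--Thomassen): a simple graph given by a
symmetric irreflexive adjacency relation on a finite vertex set, a rotation system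
(for each vertex a cyclic order of its neighbours), genus 0 (Euler's formula
V - E + F = 2 for the connected graph), and a distinguished unbounded face.\<close>

definition simple_graph :: "'v set \<Rightarrow> ('v \<Rightarrow> 'v \<Rightarrow> bool) \<Rightarrow> bool" where
  "simple_graph V adj \<longleftrightarrow> finite V \<and>
     (\<forall>u v. adj u v \<longrightarrow> u \<in> V \<and> v \<in> V \<and> u \<noteq> v \<and> adj v u)"

definition connected_on :: "'v set \<Rightarrow> ('v \<Rightarrow> 'v \<Rightarrow> bool) \<Rightarrow> bool" where
  "connected_on W adj \<longleftrightarrow> W \<noteq> {} \<and>
     (\<forall>u\<in>W. \<forall>v\<in>W. (\<lambda>x y. adj x y \<and> x \<in> W \<and> y \<in> W)\<^sup>*\<^sup>* u v)"

definition two_connected :: "'v set \<Rightarrow> ('v \<Rightarrow> 'v \<Rightarrow> bool) \<Rightarrow> bool" where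
  "two_connected V adj \<longleftrightarrow> card V \<ge> 3 \<and> connected_on V adj \<and>
     (\<forall>x\<in>V. connected_on (V - {x}) adj)"

definition nbrs :: "('v \<Rightarrow> 'v \<Rightarrow> bool) \<Rightarrow> 'v \<Rightarrow> 'v set" where
  "nbrs adj v = {u. adj v u}"

definition graph_edges :: "('v \<Rightarrow> 'v \<Rightarrow> bool) \<Rightarrow> 'v set set" where
  "graph_edges adj = {{u, v} | u v. adj u v}"

definition darts :: "('v \<Rightarrow> 'v \<Rightarrow> bool) \<Rightarrow> ('v \<times> 'v) set" where
  "darts adj = {(u, v). adj u v}"

definition rotation_system :: "'v set \<Rightarrow> ('v \<Rightarrow> 'v \<Rightarrow> bool) \<Rightarrow> ('v \<Rightarrow> 'v \<Rightarrow> 'v) \<Rightarrow> bool" where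
  "rotation_system V adj rot \<longleftrightarrow>
     (\<forall>v\<in>V. bij_betw (rot v) (nbrs adj v) (nbrs adj v) \<and>
       (\<forall>u\<in>nbrs adj v. \<forall>w\<in>nbrs adj v. \<exists>n. (rot v ^^ n) u = w))"

definition face_step :: "('v \<Rightarrow> 'v \<Rightarrow> 'v) \<Rightarrow> 'v \<times> 'v \<Rightarrow> 'v \<times> 'v" where
  "face_step rot d = (snd d, rot (snd d) (fst d))"

definition face_of :: "('v \<Rightarrow> 'v \<Rightarrow> 'v) \<Rightarrow> 'v \<times> 'v \<Rightarrow> ('v \<times> 'v) set" where
  "face_of rot d = range (\<lambda>n. (face_step rot ^^ n) d)"

definition faces :: "('v \<Rightarrow> 'v \<Rightarrow> bool) \<Rightarrow> ('v \<Rightarrow> 'v \<Rightarrow> 'v) \<Rightarrow> ('v \<times> 'v) set set" where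
  "faces adj rot = face_of rot ` darts adj"

definition face_verts :: "('v \<times> 'v) set \<Rightarrow> 'v set" where
  "face_verts p = fst ` p"

definition face_edges :: "('v \<times> 'v) set \<Rightarrow> 'v set set" where
  "face_edges p = {{u, v} | u v. (u, v) \<in> p}"

definition face_len :: "('v \<times> 'v) set \<Rightarrow> nat" where
  "face_len p = card (face_edges p)"

definition plane_graph ::
  "'v set \<Rightarrow> ('v \<Rightarrow> 'v \<Rightarrow> bool) \<Rightarrow> ('v \<Rightarrow> 'v \<Rightarrow> 'v) \<Rightarrow> ('v \<times> 'v) set \<Rightarrow> bool" where
  "plane_graph V adj rot pinf \<longleftrightarrow>
     simple_graph V adj \<and> two_connected V adj \<and> rotation_system V adj rot \<and>
     int (card V) - int (card (graph_edges adj)) + int (card (faces adj rot)) = 2 \<and>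
     pinf \<in> faces adj rot"

definition bounded_faces :: "('v \<Rightarrow> 'v \<Rightarrow> bool) \<Rightarrow> ('v \<Rightarrow> 'v \<Rightarrow> 'v) \<Rightarrow> ('v \<times> 'v) set \<Rightarrow> ('v \<times> 'v) set set" where
  "bounded_faces adj rot pinf = faces adj rot - {pinf}"

definition admissible ::
  "('v \<Rightarrow> 'v \<Rightarrow> bool) \<Rightarrow> ('v \<Rightarrow> 'v \<Rightarrow> 'v) \<Rightarrow> ('v \<times> 'v) set \<Rightarrow>
   (('v \<times> 'v) set \<Rightarrow> int) \<Rightarrow> ('v \<Rightarrow> int) \<Rightarrow> bool" where
  "admissible adj rot pinf a b \<longleftrightarrow>
     (\<forall>p\<in>bounded_faces adj rot pinf. \<forall>v\<in>face_verts p. a p + b v \<ge> 0) \<and>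
     (\<forall>v\<in>face_verts pinf. b v \<ge> 0)"

definition bface :: "('v \<Rightarrow> int) \<Rightarrow> ('v \<times> 'v) set \<Rightarrow> int" where
  "bface b p = Min (b ` face_verts p)"

definition Bval ::
  "'v set \<Rightarrow> ('v \<Rightarrow> 'v \<Rightarrow> bool) \<Rightarrow> ('v \<Rightarrow> 'v \<Rightarrow> 'v) \<Rightarrow> ('v \<times> 'v) set \<Rightarrow>
   (('v \<times> 'v) set \<Rightarrow> int) \<Rightarrow> ('v \<Rightarrow> int) \<Rightarrow> int" where
  "Bval V adj rot pinf a b = 2 * (\<Sum>v\<in>V. b v) +
     (\<Sum>p\<in>bounded_faces adj rot pinf. (int (face_len p) - 2) * a p)"

end

theory Submission
  imports Defs "HOL-Library.Disjoint_Sets" "HOL-Combinatorics.Transposition"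
begin

text \<open>
  Across an edge that is not on the outer face, condition (3) makes the value b_p of both adjacent
  faces equal to the smaller endpoint value of the edge, so the two faces agree. Turning around a
  vertex, consecutive faces are separated by such edges except where the outer face is met, and
  the outer face passes each vertex at most once; with connectivity of the graph, b_p is constant
  on the bounded faces, and condition (1) forces the constant to be -1. Hence a_p = 1 by (2) and
  b \<ge> -1, and with Euler's formula B(a,b) - (V_\<infinity> - 2) = 2 \<Sum>_w (b_w - c_w), where
  c_w is 0 on the outer face and -1 elsewhere; every summand is nonnegative.

  The combinatorial model sees planarity only through Euler's formula. That a face passes each
  vertex at most once (so that l(p) is the number of darts of p and V_\<infinity> = |p_\<infinity>|)
  comes from the genus bound V - E + F \<le> 2 for connected combinatorial maps: if a face visited
  a vertex twice, twisting the rotation at that vertex would create one more vertex cycle and one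
  more face, while 2-connectivity keeps the twisted map connected. The genus bound is proved by
  switching the edges on one at a time, starting from the rotation permutation: each switch
  composes the current permutation with a transposition, which splits or merges one cycle.
\<close>

section \<open>Orbits of permutations of a finite set\<close>

definition orbit :: "('a \<Rightarrow> 'a) \<Rightarrow> 'a \<Rightarrow> 'a set" where
  "orbit f x = range (\<lambda>n. (f ^^ n) x)"

definition orbits :: "('a \<Rightarrow> 'a) \<Rightarrow> 'a set \<Rightarrow> 'a set set" where
  "orbits f S = orbit f ` S"

text \<open>Only the restriction of f to S matters; its values outside S are arbitrary.\<close>

definition perm_on :: "('a \<Rightarrow> 'a) \<Rightarrow> 'a set \<Rightarrow> bool" where
  "perm_on f S \<longleftrightarrow> finite S \<and> f ` S \<subseteq> S \<and> inj_on f S"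

lemma funpow_apply_add: "(f ^^ m) ((f ^^ n) x) = (f ^^ (m + n)) x"
  by (simp add: funpow_add)

lemma funpow_in_orbit: "(f ^^ n) x \<in> orbit f x"
  unfolding orbit_def by (rule rangeI)

lemma orbit_self: "x \<in> orbit f x"
  using funpow_in_orbit[of 0] by simp

lemma orbit_closed: "y \<in> orbit f x \<Longrightarrow> f y \<in> orbit f x"
proof -
  assume "y \<in> orbit f x"
  then obtain n where "y = (f ^^ n) x" unfolding orbit_def by blast
  then have "f y = (f ^^ Suc n) x" by simp
  then show ?thesis by (simp only: funpow_in_orbit)
qed

lemma orbit_least:
  assumes "x \<in> A" and "\<And>y. y \<in> A \<Longrightarrow> f y \<in> A"
  shows "orbit f x \<subseteq> A"
proof -
  have "(f ^^ n) x \<in> A" for n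
    by (induction n) (use assms in auto)
  then show ?thesis unfolding orbit_def by blast
qed

lemma orbit_trans: "y \<in> orbit f x \<Longrightarrow> orbit f y \<subseteq> orbit f x"
  by (rule orbit_least) (auto intro: orbit_closed)

lemma perm_on_funpow_in: "perm_on f S \<Longrightarrow> x \<in> S \<Longrightarrow> (f ^^ n) x \<in> S"
  by (induction n) (auto simp: perm_on_def)

lemma orbit_subset: "perm_on f S \<Longrightarrow> x \<in> S \<Longrightarrow> orbit f x \<subseteq> S"
  by (rule orbit_least) (auto simp: perm_on_def)

lemma perm_on_funpow_inj:
  "perm_on f S \<Longrightarrow> x \<in> S \<Longrightarrow> y \<in> S \<Longrightarrow> (f ^^ n) x = (f ^^ n) y \<Longrightarrow> x = y"
proof (induction n)
  case (Suc n)
  then show ?case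
    using perm_on_funpow_in[of f S] unfolding perm_on_def inj_on_def by auto
qed simp

lemma perm_on_periodic:
  assumes f: "perm_on f S" and x: "x \<in> S"
  obtains p where "p > 0" and "(f ^^ p) x = x"
proof -
  have "range (\<lambda>n. (f ^^ n) x) \<subseteq> S"
    using perm_on_funpow_in[OF f x] by blast
  then have "finite (range (\<lambda>n. (f ^^ n) x))"
    using f finite_subset unfolding perm_on_def by blast
  then have "\<not> inj (\<lambda>n. (f ^^ n) x)"
    using finite_imageD infinite_UNIV_nat by blast
  then obtain i j where ij: "i < j" "(f ^^ i) x = (f ^^ j) x"
    unfolding inj_def by (metis linorder_neqE_nat)
  then have "(f ^^ i) ((f ^^ (j - i)) x) = (f ^^ i) x"
    by (simp add: funpow_apply_add)
  then have "(f ^^ (j - i)) x = x"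
    by (rule perm_on_funpow_inj[OF f perm_on_funpow_in[OF f x] x])
  with ij(1) show ?thesis by (intro that[of "j - i"]) auto
qed

lemma orbit_sym:
  assumes f: "perm_on f S" and x: "x \<in> S" and y: "y \<in> orbit f x"
  shows "x \<in> orbit f y"
proof -
  obtain p where p: "p > 0" "(f ^^ p) x = x" using perm_on_periodic[OF f x] .
  obtain k where k: "y = (f ^^ k) x" using y unfolding orbit_def by blast
  have "((f ^^ p) ^^ k) x = x" using p(2) by (induction k) auto
  then have "(f ^^ (p * k - k)) y = x"
    using p(1) by (simp add: k funpow_apply_add funpow_mult)
  then show ?thesis using funpow_in_orbit by metis
qed

lemma orbit_sym_iff:
  "perm_on f S \<Longrightarrow> x \<in> S \<Longrightarrow> y \<in> S \<Longrightarrow> x \<in> orbit f y \<longleftrightarrow> y \<in> orbit f x"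
  using orbit_sym by metis

lemma orbit_eq:
  assumes "perm_on f S" and "x \<in> S" and "y \<in> orbit f x"
  shows "orbit f y = orbit f x"
  using orbit_trans[OF assms(3)] orbit_trans[OF orbit_sym[OF assms]] by (rule subset_antisym)

lemma orbit_unique:
  assumes "perm_on f S" and "C \<in> orbits f S" and "x \<in> C"
  shows "C = orbit f x"
proof -
  obtain y where "y \<in> S" "C = orbit f y" using assms(2) unfolding orbits_def by blast
  with orbit_eq[OF assms(1)] assms(3) show ?thesis by simp
qed

lemma orbit_pred:
  assumes "perm_on f S" and "x \<in> S"
  obtains q where "q \<in> orbit f x" and "f q = x"
proof -
  obtain p where p: "p > 0" "(f ^^ p) x = x" using perm_on_periodic[OF assms] .
  then obtain k where "p = Suc k" by (cases p) auto
  then have "f ((f ^^ k) x) = x" using p(2) by simp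
  then show ?thesis by (rule that[OF funpow_in_orbit])
qed

lemma finite_orbits: "perm_on f S \<Longrightarrow> finite (orbits f S)"
  unfolding orbits_def perm_on_def by simp

lemma orbits_partition:
  assumes f: "perm_on f S"
  shows "partition_on S (orbits f S)"
proof (rule partition_onI)
  have "\<Union> (orbits f S) \<subseteq> S"
    unfolding orbits_def by (rule UN_least[OF orbit_subset[OF f]])
  moreover have "S \<subseteq> \<Union> (orbits f S)"
    unfolding orbits_def by (auto intro: orbit_self)
  ultimately show "\<Union> (orbits f S) = S" ..
  show "disjnt A B" if A: "A \<in> orbits f S" and B: "B \<in> orbits f S" and AB: "A \<noteq> B" for A B
  proof -
    have "z \<notin> B" if "z \<in> A" for z
      using orbit_unique[OF f A that] orbit_unique[OF f B] AB by metis
    then show ?thesis unfolding disjnt_def by blast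
  qed
  show "{} \<notin> orbits f S"
    unfolding orbits_def using orbit_self by (metis empty_iff imageE)
qed

lemma perm_on_cong:
  assumes "\<And>x. x \<in> S \<Longrightarrow> f x = g x" and "perm_on f S"
  shows "perm_on g S"
  using assms unfolding perm_on_def by (auto simp: inj_on_def image_subset_iff)

lemma orbit_cong:
  assumes fg: "\<And>x. x \<in> S \<Longrightarrow> f x = g x" and f: "perm_on f S" and x: "x \<in> S"
  shows "orbit f x = orbit g x"
proof
  have g: "perm_on g S" using perm_on_cong[OF fg f] .
  show "orbit f x \<subseteq> orbit g x"
    by (rule orbit_least[OF orbit_self]) (metis fg orbit_closed orbit_subset[OF g x] subsetD)
  show "orbit g x \<subseteq> orbit f x"
    by (rule orbit_least[OF orbit_self]) (metis fg orbit_closed orbit_subset[OF f x] subsetD)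
qed

lemma orbits_cong:
  "(\<And>x. x \<in> S \<Longrightarrow> f x = g x) \<Longrightarrow> perm_on f S \<Longrightarrow> orbits f S = orbits g S"
  unfolding orbits_def using orbit_cong by (metis image_cong)

section \<open>Composing a permutation with a transposition\<close>

lemma perm_on_comp_transpose:
  assumes "perm_on f S" and "a \<in> S" and "b \<in> S"
  shows "perm_on (f \<circ> transpose a b) S"
proof -
  have t: "transpose a b ` S = S" using assms(2,3) by simp
  then have "(f \<circ> transpose a b) ` S = f ` S" by (simp only: image_comp[symmetric])
  with t show ?thesis
    using assms(1) inj_on_transpose[of a b S] unfolding perm_on_def by (simp add: comp_inj_on)
qed

lemma orbit_comp_transpose_other:
  assumes "a \<notin> orbit f x" and "b \<notin> orbit f x"
  shows "orbit (f \<circ> transpose a b) x = orbit f x"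
proof
  let ?g = "f \<circ> transpose a b"
  have agree: "f (transpose a b y) = f y" if "y \<in> orbit f x" for y
    using that assms by (metis comp_apply transpose_apply_other)
  show sub: "orbit ?g x \<subseteq> orbit f x"
    by (rule orbit_least[OF orbit_self]) (simp add: agree orbit_closed)
  show "orbit f x \<subseteq> orbit ?g x"
  proof (rule orbit_least[OF orbit_self])
    fix y assume "y \<in> orbit ?g x"
    then have "?g y \<in> orbit ?g x" and "y \<in> orbit f x" using sub by (auto simp only: orbit_closed)
    then show "f y \<in> orbit ?g x" using agree by simp
  qed
qed

lemma orbit_comp_transpose_cover:
  "orbit f a \<union> orbit f b \<subseteq> orbit (f \<circ> transpose a b) a \<union> orbit (f \<circ> transpose a b) b"
proof -
  let ?g = "f \<circ> transpose a b"
  let ?U = "orbit ?g a \<union> orbit ?g b"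
  have "f y \<in> ?U" if "y \<in> ?U" for y
  proof -
    have "transpose a b y \<in> ?U"
      using that orbit_self[of a ?g] orbit_self[of b ?g] by (auto simp: transpose_def)
    then have "?g (transpose a b y) \<in> ?U"
      using orbit_closed[of "transpose a b y" ?g a] orbit_closed[of "transpose a b y" ?g b] by blast
    then show ?thesis by simp
  qed
  moreover have "a \<in> ?U" "b \<in> ?U" by (simp_all add: orbit_self)
  ultimately show ?thesis using orbit_least[of _ ?U f] by (metis Un_least)
qed

lemma funpow_first_hit:
  assumes hit: "(f ^^ n) b = a" and ab: "a \<noteq> b"
  obtains k where "0 < k" and "(f ^^ k) b = a" and "\<And>j. j < k \<Longrightarrow> (f ^^ j) b \<noteq> a"
    and "\<And>j. 0 < j \<Longrightarrow> j \<le> k \<Longrightarrow> (f ^^ j) b \<noteq> b"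
proof -
  define k where "k = (LEAST k. (f ^^ k) b = a)"
  have fk: "(f ^^ k) b = a"
    unfolding k_def by (rule LeastI[of "\<lambda>k. (f ^^ k) b = a", OF hit])
  have before_a: "(f ^^ j) b \<noteq> a" if "j < k" for j
    using that not_less_Least unfolding k_def by blast
  have not_b: "(f ^^ j) b \<noteq> b" if "0 < j" "j \<le> k" for j
  proof
    assume fj: "(f ^^ j) b = b"
    show False
    proof (cases "j = k")
      case True then show False using fj fk ab by simp
    next
      case False
      have "(f ^^ (k - j)) b = (f ^^ (k - j)) ((f ^^ j) b)" using fj by simp
      also have "\<dots> = a" using \<open>j \<le> k\<close> fk by (simp add: funpow_apply_add)
      finally show False using before_a[of "k - j"] that by simp
    qed
  qed
  have "0 < k" using fk ab by (cases k) auto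
  then show ?thesis by (rule that[OF _ fk before_a not_b])
qed

lemma orbit_comp_transpose_separates:
  assumes f: "perm_on f S" and a: "a \<in> S" and ab: "a \<noteq> b" and b: "b \<in> orbit f a"
  shows "b \<notin> orbit (f \<circ> transpose a b) a"
proof -
  have "a \<in> orbit f b" by (rule orbit_sym[OF f a b])
  then obtain n where "(f ^^ n) b = a" unfolding orbit_def by blast
  then obtain k where k0: "0 < k" and fk: "(f ^^ k) b = a"
    and before_a: "\<And>j. j < k \<Longrightarrow> (f ^^ j) b \<noteq> a"
    and not_b: "\<And>j. 0 < j \<Longrightarrow> j \<le> k \<Longrightarrow> (f ^^ j) b \<noteq> b"
    using ab by (rule funpow_first_hit) blast
  txt \<open>Under f \<circ> transpose a b the arc f b, ..., f^k b = a of the f-cycle closes up, avoiding b.\<close>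
  define A where "A = {(f ^^ j) b | j. 0 < j \<and> j \<le> k}"
  have "(f \<circ> transpose a b) y \<in> A" if "y \<in> A" for y
  proof -
    obtain j where j: "y = (f ^^ j) b" "0 < j" "j \<le> k" using \<open>y \<in> A\<close> unfolding A_def by blast
    show ?thesis
    proof (cases "j = k")
      case True
      then have "(f \<circ> transpose a b) y = (f ^^ 1) b" using j fk by simp
      then show ?thesis unfolding A_def using k0 by fastforce
    next
      case False
      then have "(f \<circ> transpose a b) y = (f ^^ Suc j) b"
        using j before_a[of j] not_b[of j] by simp
      then show ?thesis unfolding A_def using j False by fastforce
    qed
  qed
  moreover have "a \<in> A" unfolding A_def using fk k0 by blast
  ultimately have "orbit (f \<circ> transpose a b) a \<subseteq> A" by (rule orbit_least[rotated])
  moreover have "b \<notin> A"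
  proof
    assume "b \<in> A"
    then obtain j where "b = (f ^^ j) b" "0 < j" "j \<le> k" unfolding A_def by blast
    then show False using not_b by metis
  qed
  ultimately show ?thesis by (rule contra_subsetD)
qed

lemma orbit_comp_transpose_joins:
  assumes f: "perm_on f S" and a: "a \<in> S" and b: "b \<in> S" and ba: "b \<notin> orbit f a"
  shows "b \<in> orbit (f \<circ> transpose a b) a"
proof -
  let ?g = "f \<circ> transpose a b"
  let ?O = "orbit ?g a"
  txt \<open>
    A is closed under f: f preserves S - orbit f b, and on orbit f b the maps f and ?g agree
    except at b, where f b = ?g a.
  \<close>
  define A where "A = ?O \<union> (S - orbit f b)"
  have OS: "?O \<subseteq> S" by (rule orbit_subset[OF perm_on_comp_transpose[OF f a b] a])
  have a_off: "a \<notin> orbit f b" using ba orbit_sym[OF f b] by blast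
  have "f y \<in> A" if "y \<in> A" for y
  proof (cases "y \<in> orbit f b")
    case False
    then have yS: "y \<in> S" using that OS unfolding A_def by blast
    have "f y \<notin> orbit f b"
    proof
      assume "f y \<in> orbit f b"
      moreover have "y \<in> orbit f (f y)" using orbit_sym[OF f yS] orbit_closed[OF orbit_self] .
      ultimately have "y \<in> orbit f b" using orbit_trans[of "f y" f b] by blast
      then show False using False by contradiction
    qed
    moreover have "f y \<in> S" using yS f unfolding perm_on_def by blast
    ultimately show ?thesis unfolding A_def by blast
  next
    case True
    then have "y \<in> ?O" "y \<noteq> a" using that a_off unfolding A_def by auto
    then show ?thesis
      using orbit_closed[of y ?g a] orbit_closed[OF orbit_self, of ?g a]
      unfolding A_def by (cases "y = b") auto
  qed
  moreover have "f b \<in> A" unfolding A_def using orbit_closed[OF orbit_self, of ?g a] by simp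
  ultimately have "orbit f (f b) \<subseteq> A" by (rule orbit_least[rotated])
  moreover have "b \<in> orbit f (f b)" using orbit_sym[OF f b] orbit_closed[OF orbit_self] .
  ultimately have "b \<in> A" by (rule subsetD)
  then show ?thesis using orbit_self[of b f] by (simp add: A_def)
qed

lemma orbits_comp_transpose:
  assumes f: "perm_on f S" and a: "a \<in> S" and b: "b \<in> S"
  defines "g \<equiv> f \<circ> transpose a b"
  shows "orbits g S = {orbit g a, orbit g b} \<union> (orbits f S - {orbit f a, orbit f b})"
proof
  have g: "perm_on g S" unfolding g_def by (rule perm_on_comp_transpose[OF f a b])
  have other: "orbit g x = orbit f x" if "x \<in> S" "x \<notin> orbit f a" "x \<notin> orbit f b" for x
  proof -
    have "a \<notin> orbit f x" "b \<notin> orbit f x"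
      using that orbit_sym_iff[OF f that(1) a] orbit_sym_iff[OF f that(1) b] by simp_all
    then show ?thesis unfolding g_def by (rule orbit_comp_transpose_other)
  qed
  show "orbits g S \<subseteq> {orbit g a, orbit g b} \<union> (orbits f S - {orbit f a, orbit f b})"
  proof
    fix C assume "C \<in> orbits g S"
    then obtain x where x: "x \<in> S" "C = orbit g x" unfolding orbits_def by blast
    show "C \<in> {orbit g a, orbit g b} \<union> (orbits f S - {orbit f a, orbit f b})"
    proof (cases "x \<in> orbit f a \<union> orbit f b")
      case True
      then have "x \<in> orbit g a \<union> orbit g b"
        using orbit_comp_transpose_cover[of f a b] unfolding g_def by (rule subsetD[rotated])
      then show ?thesis using x orbit_eq[OF g a] orbit_eq[OF g b] by blast
    next
      case False
      then have "orbit f x \<noteq> orbit f a" "orbit f x \<noteq> orbit f b"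
        using orbit_self[of x f] by auto
      then show ?thesis using x other False unfolding orbits_def by auto
    qed
  qed
  show "{orbit g a, orbit g b} \<union> (orbits f S - {orbit f a, orbit f b}) \<subseteq> orbits g S"
  proof
    fix C assume C: "C \<in> {orbit g a, orbit g b} \<union> (orbits f S - {orbit f a, orbit f b})"
    show "C \<in> orbits g S"
    proof (cases "C \<in> {orbit g a, orbit g b}")
      case True
      then show ?thesis using a b unfolding orbits_def by blast
    next
      case False
      then obtain x where x: "x \<in> S" "C = orbit f x" "C \<noteq> orbit f a" "C \<noteq> orbit f b"
        using C unfolding orbits_def by blast
      then have "x \<notin> orbit f a" "x \<notin> orbit f b"
        using orbit_eq[OF f a, of x] orbit_eq[OF f b, of x] by metis+
      then have "C = orbit g x" using x other by simp
      then show ?thesis using x(1) unfolding orbits_def by blast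
    qed
  qed
qed

lemma card_orbits_comp_transpose:
  assumes f: "perm_on f S" and a: "a \<in> S" and b: "b \<in> S"
  defines "g \<equiv> f \<circ> transpose a b"
  shows "card (orbits g S) + card {orbit f a, orbit f b} = card (orbits f S) + card {orbit g a, orbit g b}"
proof -
  define R where "R = orbits f S - {orbit f a, orbit f b}"
  have fin: "finite R" unfolding R_def using finite_orbits[OF f] by simp
  have "orbit g x \<notin> R" if "x \<in> {a, b}" for x
  proof
    assume x: "orbit g x \<in> R"
    then have "orbit g x = orbit f x"
      unfolding R_def by (intro orbit_unique[OF f _ orbit_self]) simp
    with x that show False unfolding R_def by auto
  qed
  then have "card (orbits g S) = card {orbit g a, orbit g b} + card R"
    unfolding orbits_comp_transpose[OF f a b, folded g_def, folded R_def] using fin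
    by (subst card_Un_disjoint) auto
  moreover have sub: "{orbit f a, orbit f b} \<subseteq> orbits f S"
    using a b unfolding orbits_def by blast
  then have "card (orbits f S) = card {orbit f a, orbit f b} + card R"
    unfolding R_def using card_Diff_subset[OF _ sub] card_mono[OF finite_orbits[OF f] sub] by simp
  ultimately show ?thesis by simp
qed

lemma card_orbits_split:
  assumes f: "perm_on f S" and a: "a \<in> S" and ab: "a \<noteq> b" and b: "b \<in> orbit f a"
  shows "card (orbits (f \<circ> transpose a b) S) = card (orbits f S) + 1"
proof -
  have bS: "b \<in> S" using orbit_subset[OF f a] b by blast
  have "orbit (f \<circ> transpose a b) a \<noteq> orbit (f \<circ> transpose a b) b"
    using orbit_comp_transpose_separates[OF f a ab b] orbit_self by metis
  moreover have "orbit f b = orbit f a" by (rule orbit_eq[OF f a b])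
  ultimately show ?thesis using card_orbits_comp_transpose[OF f a bS] by simp
qed

lemma card_orbits_merge:
  assumes f: "perm_on f S" and a: "a \<in> S" and b: "b \<in> S" and ba: "b \<notin> orbit f a"
  shows "card (orbits (f \<circ> transpose a b) S) + 1 = card (orbits f S)"
proof -
  have "orbit (f \<circ> transpose a b) b = orbit (f \<circ> transpose a b) a"
    by (rule orbit_eq[OF perm_on_comp_transpose[OF f a b] a orbit_comp_transpose_joins[OF f a b ba]])
  moreover have "orbit f a \<noteq> orbit f b" using ba orbit_self by metis
  ultimately show ?thesis using card_orbits_comp_transpose[OF f a b] by simp
qed

lemma card_orbits_comp_transpose_le:
  assumes f: "perm_on f S" and a: "a \<in> S" and b: "b \<in> S" and ab: "a \<noteq> b"
  shows "card (orbits (f \<circ> transpose a b) S) \<le> card (orbits f S) + 1"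
  using card_orbits_split[OF f a ab] card_orbits_merge[OF f a b]
  by (cases "b \<in> orbit f a") auto

section \<open>Combinatorial maps and the genus bound\<close>

lemma partition_on_merge:
  assumes "partition_on S P" and "A \<in> P" and "B \<in> P"
  shows "partition_on S (insert (A \<union> B) (P - {A, B}))"
proof (rule partition_onI)
  have "\<Union> (insert (A \<union> B) (P - {A, B})) = \<Union> P" using assms(2,3) by blast
  then show "\<Union> (insert (A \<union> B) (P - {A, B})) = S" using partition_onD1[OF assms(1)] by simp
  have "A \<noteq> {}" using partition_onD3[OF assms(1)] assms(2) by metis
  then show "{} \<notin> insert (A \<union> B) (P - {A, B})" using partition_onD3[OF assms(1)] by simp
  have "disjnt X Y" if "X \<in> P" "Y \<in> P" "X \<noteq> Y" for X Y
    using assms(1) that unfolding partition_on_def pairwise_def by blast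
  then show "disjnt X Y" if "X \<in> insert (A \<union> B) (P - {A, B})"
    "Y \<in> insert (A \<union> B) (P - {A, B})" "X \<noteq> Y" for X Y
    using that assms(2,3) by (auto simp: disjnt_def)
qed

lemma card_partition_merge:
  assumes P: "partition_on S P" "finite P" and A: "A \<in> P" and B: "B \<in> P" and AB: "A \<noteq> B"
  shows "card (insert (A \<union> B) (P - {A, B})) + 1 = card P"
proof -
  have "A \<union> B \<notin> P - {A, B}"
  proof
    assume AB': "A \<union> B \<in> P - {A, B}"
    then have "disjnt A (A \<union> B)"
      using partition_onD2[OF P(1)] A unfolding pairwise_def by blast
    moreover have "A \<noteq> {}" using partition_onD3[OF P(1)] A by blast
    ultimately show False unfolding disjnt_def by blast
  qed
  moreover have "card (P - {A, B}) + 2 = card P"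
  proof -
    have sub: "{A, B} \<subseteq> P" using A B by simp
    then have "2 \<le> card P" using card_mono[OF P(2) sub] AB by simp
    moreover have "card (P - {A, B}) = card P - 2" using card_Diff_subset[OF _ sub] AB by simp
    ultimately show ?thesis by simp
  qed
  ultimately show ?thesis using P(2) by simp
qed

locale comb_map =
  fixes S :: "'a set" and \<sigma> :: "'a \<Rightarrow> 'a" and \<alpha> :: "'a \<Rightarrow> 'a" and edge :: "'a \<Rightarrow> 'e"
  assumes perm_\<sigma>: "perm_on \<sigma> S"
    and \<alpha>_in: "x \<in> S \<Longrightarrow> \<alpha> x \<in> S"
    and \<alpha>_\<alpha>: "x \<in> S \<Longrightarrow> \<alpha> (\<alpha> x) = x"
    and \<alpha>_neq: "x \<in> S \<Longrightarrow> \<alpha> x \<noteq> x"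
    and edge_\<alpha>: "x \<in> S \<Longrightarrow> edge (\<alpha> x) = edge x"
    and edge_eqD: "x \<in> S \<Longrightarrow> y \<in> S \<Longrightarrow> edge x = edge y \<Longrightarrow> y = x \<or> y = \<alpha> x"
begin

lemma finite_S: "finite S"
  using perm_\<sigma> unfolding perm_on_def by blast

text \<open>
  flip T reverses the darts whose edge lies in T, so that \<sigma> \<circ> flip T interpolates between
  the vertex permutation \<sigma> (T = {}) and the face permutation \<sigma> \<circ> \<alpha> (T = all edges).
\<close>

definition flip :: "'e set \<Rightarrow> 'a \<Rightarrow> 'a" where
  "flip T x = (if x \<in> S \<and> edge x \<in> T then \<alpha> x else x)"

lemma flip_in: "x \<in> S \<Longrightarrow> flip T x \<in> S"
  by (simp add: flip_def \<alpha>_in)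

lemma flip_flip: "x \<in> S \<Longrightarrow> flip T (flip T x) = x"
  by (simp add: flip_def \<alpha>_in \<alpha>_\<alpha> edge_\<alpha>)

lemma perm_on_flip: "perm_on (\<sigma> \<circ> flip T) S"
proof -
  have "inj_on (flip T) S" by (metis flip_flip inj_onI)
  moreover have "flip T ` S \<subseteq> S" using flip_in by blast
  ultimately show ?thesis
    using perm_\<sigma> unfolding perm_on_def by (auto intro: comp_inj_on_iff[THEN iffD1] inj_on_subset)
qed

lemma flip_insert:
  assumes x: "x \<in> S" and e: "edge x \<notin> T"
  shows "flip (insert (edge x) T) y = flip T (transpose x (\<alpha> x) y)"
proof -
  have "edge y \<noteq> edge x" if "y \<in> S" "y \<noteq> x" "y \<noteq> \<alpha> x"
    using edge_eqD[OF x that(1)] that by auto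
  then show ?thesis
    using x e \<alpha>_neq[OF x] by (auto simp: flip_def transpose_def \<alpha>_in \<alpha>_\<alpha> edge_\<alpha>)
qed

lemma flip_all: "x \<in> S \<Longrightarrow> flip (edge ` S) x = \<alpha> x"
  by (simp add: flip_def)

lemma merge_blocks_closed:
  assumes P: "partition_on S P" and closed: "\<forall>B\<in>P. \<sigma> ` B \<subseteq> B \<and> flip T ` B \<subseteq> B"
    and x: "x \<in> S" and e: "edge x \<notin> T"
    and Bx: "Bx \<in> P" "x \<in> Bx" and By: "By \<in> P" "\<alpha> x \<in> By"
    and B: "B \<in> insert (Bx \<union> By) (P - {Bx, By})"
  shows "\<sigma> ` B \<subseteq> B \<and> flip (insert (edge x) T) ` B \<subseteq> B"
proof -
  have disj: "A \<inter> A' = {}" if "A \<in> P" "A' \<in> P" "A \<noteq> A'" for A A'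
    using partition_onD2[OF P] that unfolding pairwise_def disjnt_def by blast
  have "\<sigma> ` B \<subseteq> B \<and> flip T ` B \<subseteq> B \<and> (x \<in> B \<longleftrightarrow> \<alpha> x \<in> B)"
  proof (cases "B = Bx \<union> By")
    case True
    then show ?thesis using closed Bx By by (auto simp: image_Un)
  next
    case False
    then have "B \<in> P" "B \<noteq> Bx" "B \<noteq> By" using B by auto
    then show ?thesis using closed disj[of B Bx] disj[of B By] Bx By by blast
  qed
  moreover have "flip (insert (edge x) T) ` B = flip T ` transpose x (\<alpha> x) ` B"
    by (auto simp: flip_insert[OF x e])
  ultimately show ?thesis by simp
qed

text \<open>
  Switching on the edge of x composes \<sigma> \<circ> flip T with the transposition of x and \<alpha> x,
  which changes its number of cycles by one. An increase needs x and \<alpha> x in one cycle, hence in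
  one block; if they lie in different blocks, the count drops and the two blocks are merged.
\<close>

lemma partial_genus_bound_step:
  assumes P: "partition_on S P" and closed: "\<forall>B\<in>P. \<sigma> ` B \<subseteq> B \<and> flip T ` B \<subseteq> B"
    and count: "card (orbits \<sigma> S) + card (orbits (\<sigma> \<circ> flip T) S) \<le> 2 * card P + card T"
    and T: "finite T" and x: "x \<in> S" and e: "edge x \<notin> T"
  obtains P' where "partition_on S P'"
    and "\<forall>B\<in>P'. \<sigma> ` B \<subseteq> B \<and> flip (insert (edge x) T) ` B \<subseteq> B"
    and "card (orbits \<sigma> S) + card (orbits (\<sigma> \<circ> flip (insert (edge x) T)) S)
           \<le> 2 * card P' + card (insert (edge x) T)"
proof -
  let ?\<pi> = "\<sigma> \<circ> flip T"
  define y where "y = \<alpha> x"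
  have y: "y \<in> S" "x \<noteq> y" unfolding y_def using \<alpha>_in[OF x] \<alpha>_neq[OF x] by auto
  have \<pi>: "perm_on ?\<pi> S" by (rule perm_on_flip)
  have \<pi>': "\<sigma> \<circ> flip (insert (edge x) T) = ?\<pi> \<circ> transpose x y"
    unfolding y_def by (simp add: fun_eq_iff flip_insert[OF x e])
  have finP: "finite P" by (rule finite_elements[OF finite_S P])
  obtain Bx By where Bx: "Bx \<in> P" "x \<in> Bx" and By: "By \<in> P" "y \<in> By"
    using partition_onD1[OF P] x y(1) by blast
  have disj: "A \<inter> A' = {}" if "A \<in> P" "A' \<in> P" "A \<noteq> A'" for A A'
    using partition_onD2[OF P] that unfolding pairwise_def disjnt_def by blast
  define P' where "P' = insert (Bx \<union> By) (P - {Bx, By})"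
  have "partition_on S P'" unfolding P'_def by (rule partition_on_merge[OF P Bx(1) By(1)])
  moreover have "\<sigma> ` B \<subseteq> B \<and> flip (insert (edge x) T) ` B \<subseteq> B" if "B \<in> P'" for B
    using that unfolding P'_def by (rule merge_blocks_closed[OF P closed x e Bx By[unfolded y_def]])
  moreover have "card (orbits \<sigma> S) + card (orbits (\<sigma> \<circ> flip (insert (edge x) T)) S)
      \<le> 2 * card P' + card (insert (edge x) T)"
  proof (cases "Bx = By")
    case True
    then have "P' = P" unfolding P'_def using Bx(1) by auto
    then show ?thesis
      using count card_orbits_comp_transpose_le[OF \<pi> x y] T e unfolding \<pi>' by simp
  next
    case False
    have "\<sigma> ` Bx \<subseteq> Bx" "flip T ` Bx \<subseteq> Bx" using closed Bx(1) by auto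
    then have "?\<pi> ` Bx \<subseteq> Bx" by (fastforce simp: image_subset_iff)
    then have "orbit ?\<pi> x \<subseteq> Bx" using orbit_least[of x Bx ?\<pi>] Bx(2) by blast
    then have "y \<notin> orbit ?\<pi> x" using disj[OF Bx(1) By(1) False] By(2) by blast
    then have "card (orbits (?\<pi> \<circ> transpose x y) S) + 1 = card (orbits ?\<pi> S)"
      by (rule card_orbits_merge[OF \<pi> x y(1)])
    moreover have "card P' + 1 = card P"
      unfolding P'_def by (rule card_partition_merge[OF P finP Bx(1) By(1) False])
    ultimately show ?thesis using count T e unfolding \<pi>' by simp
  qed
  ultimately show ?thesis by (intro that[of P']) auto
qed

lemma partial_genus_bound:
  assumes "finite T" and "T \<subseteq> edge ` S"
  shows "\<exists>P. partition_on S P \<and> (\<forall>B\<in>P. \<sigma> ` B \<subseteq> B \<and> flip T ` B \<subseteq> B) \<and>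
    card (orbits \<sigma> S) + card (orbits (\<sigma> \<circ> flip T) S) \<le> 2 * card P + card T"
  using assms
proof (induction T rule: finite_induct)
  case empty
  have "flip {} = id" by (simp add: fun_eq_iff flip_def)
  moreover have "\<sigma> ` B \<subseteq> B" if B: "B \<in> orbits \<sigma> S" for B
  proof -
    obtain z where "B = orbit \<sigma> z" using B unfolding orbits_def by blast
    then show ?thesis by (auto simp: image_subset_iff intro: orbit_closed)
  qed
  ultimately show ?case using orbits_partition[OF perm_\<sigma>] by (intro exI[of _ "orbits \<sigma> S"]) simp
next
  case (insert e T)
  then obtain x where "x \<in> S" "e = edge x" by blast
  with insert partial_genus_bound_step[of _ T x] show ?case by (metis insert_subset)
qed

theorem genus_bound:
  assumes connected: "\<And>B. B \<subseteq> S \<Longrightarrow> B \<noteq> {} \<Longrightarrow> \<sigma> ` B \<subseteq> B \<Longrightarrow> \<alpha> ` B \<subseteq> B \<Longrightarrow> B = S"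
  shows "card (orbits \<sigma> S) + card (orbits (\<sigma> \<circ> \<alpha>) S) \<le> card (edge ` S) + 2"
proof -
  obtain P where P: "partition_on S P" and closed: "\<forall>B\<in>P. \<sigma> ` B \<subseteq> B \<and> flip (edge ` S) ` B \<subseteq> B"
    and count: "card (orbits \<sigma> S) + card (orbits (\<sigma> \<circ> flip (edge ` S)) S) \<le> 2 * card P + card (edge ` S)"
    using partial_genus_bound[of "edge ` S"] finite_S by blast
  have "orbits (\<sigma> \<circ> flip (edge ` S)) S = orbits (\<sigma> \<circ> \<alpha>) S"
    by (rule orbits_cong[OF _ perm_on_flip]) (simp add: flip_all)
  moreover have "P \<subseteq> {S}"
  proof
    fix B assume B: "B \<in> P"
    have BS: "B \<subseteq> S" using partition_onD1[OF P] B by blast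
    then have "flip (edge ` S) ` B = \<alpha> ` B" by (simp add: flip_all subsetD cong: image_cong)
    moreover have "\<sigma> ` B \<subseteq> B" "flip (edge ` S) ` B \<subseteq> B" using closed B by auto
    ultimately have "\<sigma> ` B \<subseteq> B" "\<alpha> ` B \<subseteq> B" by simp_all
    moreover have "B \<noteq> {}" using partition_onD3[OF P] B by metis
    ultimately have "B = S" using connected[OF BS] by simp
    then show "B \<in> {S}" by simp
  qed
  then have "card P \<le> 1" using card_mono[of "{S}" P] by simp
  ultimately show ?thesis using count by simp
qed

lemma card_eq_twice_edges: "card S = 2 * card (edge ` S)"
proof -
  have fibre: "{x \<in> S. edge x = edge y} = {y, \<alpha> y}" if y: "y \<in> S" for y
  proof (intro set_eqI iffI)
    fix x assume "x \<in> {x \<in> S. edge x = edge y}"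
    then show "x \<in> {y, \<alpha> y}" using edge_eqD[OF y, of x] by auto
  next
    fix x assume "x \<in> {y, \<alpha> y}"
    then show "x \<in> {x \<in> S. edge x = edge y}" using y \<alpha>_in edge_\<alpha> by auto
  qed
  have "card S = (\<Sum>e\<in>edge ` S. card {x \<in> S. edge x = e})"
    using sum.group[of S "edge ` S" edge "\<lambda>_. 1 :: nat"] finite_S by simp
  also have "\<dots> = (\<Sum>e\<in>edge ` S. 2)"
  proof (rule sum.cong)
    fix e assume "e \<in> edge ` S"
    then obtain y where y: "y \<in> S" "e = edge y" by blast
    show "card {x \<in> S. edge x = e} = 2"
      using \<alpha>_neq[OF y(1)] by (auto simp: y(2) fibre[OF y(1)] card_insert_if)
  qed simp
  finally show ?thesis by simp
qed

end

section \<open>Plane embeddings as combinatorial maps\<close>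

text \<open>
  On the darts (u, v) with adj u v, rot_step rot and prod.swap play the roles of \<sigma> and \<alpha>
  of a combinatorial map, and face_step rot is its face permutation \<sigma> \<circ> \<alpha>.
\<close>

definition rot_step :: "('v \<Rightarrow> 'v \<Rightarrow> 'v) \<Rightarrow> 'v \<times> 'v \<Rightarrow> 'v \<times> 'v" where
  "rot_step rot d = (fst d, rot (fst d) (snd d))"

definition dart_edge :: "'v \<times> 'v \<Rightarrow> 'v set" where
  "dart_edge d = {fst d, snd d}"

lemma face_step_eq: "face_step rot = rot_step rot \<circ> prod.swap"
  by (simp add: fun_eq_iff face_step_def rot_step_def)

lemma fst_rot_step_funpow: "fst ((rot_step rot ^^ n) d) = fst d"
  by (induction n) (simp_all add: rot_step_def)

lemma rot_step_funpow: "(rot_step rot ^^ n) (u, v) = (u, (rot u ^^ n) v)"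
  by (induction n) (simp_all add: rot_step_def)

lemma face_of_eq: "face_of rot = orbit (face_step rot)"
  by (simp add: fun_eq_iff face_of_def orbit_def)

lemma faces_eq: "faces adj rot = orbits (face_step rot) (darts adj)"
  by (simp add: faces_def orbits_def face_of_eq)

lemma face_edges_eq: "face_edges f = dart_edge ` f"
  unfolding face_edges_def dart_edge_def by force

lemma graph_edges_eq: "graph_edges adj = dart_edge ` darts adj"
proof
  show "graph_edges adj \<subseteq> dart_edge ` darts adj"
    unfolding graph_edges_def darts_def dart_edge_def by (auto intro!: image_eqI)
  show "dart_edge ` darts adj \<subseteq> graph_edges adj"
    unfolding graph_edges_def darts_def dart_edge_def by fastforce
qed

locale plane_embedding =
  fixes V :: "'v set" and adj :: "'v \<Rightarrow> 'v \<Rightarrow> bool" and rot :: "'v \<Rightarrow> 'v \<Rightarrow> 'v"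
    and pinf :: "('v \<times> 'v) set"
  assumes plane: "plane_graph V adj rot pinf"
begin

lemma finite_V: "finite V"
  using plane unfolding plane_graph_def simple_graph_def by blast

lemma adjD: "adj u v \<Longrightarrow> u \<in> V \<and> v \<in> V \<and> u \<noteq> v \<and> adj v u"
  using plane unfolding plane_graph_def simple_graph_def by blast

lemma connected_V: "connected_on V adj"
  using plane unfolding plane_graph_def two_connected_def by blast

lemma euler: "int (card V) - int (card (graph_edges adj)) + int (card (faces adj rot)) = 2"
  using plane unfolding plane_graph_def by blast

lemma pinf_face: "pinf \<in> faces adj rot"
  using plane unfolding plane_graph_def by blast

lemma in_darts: "(u, v) \<in> darts adj \<longleftrightarrow> adj u v"
  unfolding darts_def by simp

lemma finite_darts: "finite (darts adj)"
proof (rule finite_subset)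
  show "darts adj \<subseteq> V \<times> V" unfolding darts_def using adjD by blast
  show "finite (V \<times> V)" using finite_V by simp
qed

lemma swap_dart: "d \<in> darts adj \<Longrightarrow> prod.swap d \<in> darts adj"
  unfolding darts_def using adjD by auto

lemma rot_nbrs: "u \<in> V \<Longrightarrow> bij_betw (rot u) (nbrs adj u) (nbrs adj u)"
  and rot_cyclic: "u \<in> V \<Longrightarrow> v \<in> nbrs adj u \<Longrightarrow> v' \<in> nbrs adj u \<Longrightarrow> \<exists>n. (rot u ^^ n) v = v'"
  using plane unfolding plane_graph_def rotation_system_def by blast+

lemma adj_rot: "adj u v \<Longrightarrow> adj u (rot u v)"
  using rot_nbrs[of u] adjD[of u v] unfolding nbrs_def bij_betw_def by blast

lemma adj_rot_funpow: "adj u v \<Longrightarrow> adj u ((rot u ^^ n) v)"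
  by (induction n) (simp_all add: adj_rot)

lemma rot_reaches: "adj u v \<Longrightarrow> adj u v' \<Longrightarrow> \<exists>n. (rot u ^^ n) v = v'"
  using rot_cyclic[of u v v'] adjD[of u v] unfolding nbrs_def by simp

lemma connected_avoiding:
  "x \<in> V \<Longrightarrow> u \<in> V - {x} \<Longrightarrow> v \<in> V - {x} \<Longrightarrow>
     (\<lambda>y z. adj y z \<and> y \<in> V - {x} \<and> z \<in> V - {x})\<^sup>*\<^sup>* u v"
  using plane unfolding plane_graph_def two_connected_def connected_on_def by blast

lemma exists_neighbour_avoiding:
  assumes u: "u \<in> V" and x: "x \<in> V"
  shows "\<exists>v. adj u v \<and> v \<noteq> x"
proof -
  have "card {u, x} \<le> 2" by (simp add: card_insert_if)
  moreover have "card V \<ge> 3" using plane unfolding plane_graph_def two_connected_def by blast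
  ultimately have "\<not> V \<subseteq> {u, x}" using card_mono[of "{u, x}" V] by auto
  then obtain z where z: "z \<in> V" "z \<noteq> u" "z \<noteq> x" by blast
  show ?thesis
  proof (cases "u = x")
    case True
    have "(\<lambda>y z. adj y z \<and> y \<in> V \<and> z \<in> V)\<^sup>*\<^sup>* u z"
      using connected_V u z(1) unfolding connected_on_def by blast
    then show ?thesis using z(2) True
      by (induction rule: converse_rtranclp_induct) (auto dest: adjD)
  next
    case False
    then have "(\<lambda>y z. adj y z \<and> y \<in> V - {x} \<and> z \<in> V - {x})\<^sup>*\<^sup>* u z"
      using connected_avoiding[OF x] u z by blast
    then show ?thesis using z(2) by (induction rule: converse_rtranclp_induct) auto
  qed
qed

lemma rot_neq: "adj u v \<Longrightarrow> rot u v \<noteq> v"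
proof
  assume uv: "adj u v" and fixed: "rot u v = v"
  obtain v' where v': "adj u v'" "v' \<noteq> v" using exists_neighbour_avoiding adjD[OF uv] by blast
  have "(rot u ^^ n) v = v" for n by (induction n) (simp_all add: fixed)
  then show False using rot_reaches[OF uv v'(1)] v'(2) by simp
qed

lemma perm_on_rotation: "perm_on (rot_step rot) (darts adj)"
  unfolding perm_on_def
proof (intro conjI)
  show "finite (darts adj)" by (rule finite_darts)
  show "rot_step rot ` darts adj \<subseteq> darts adj"
    unfolding darts_def rot_step_def using adj_rot by auto
  show "inj_on (rot_step rot) (darts adj)"
  proof (rule inj_onI)
    fix d d' assume d: "d \<in> darts adj" "d' \<in> darts adj" "rot_step rot d = rot_step rot d'"
    obtain u v v' where uv: "d = (u, v)" "d' = (u, v')" "rot u v = rot u v'"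
      using d(3) unfolding rot_step_def by (cases d, cases d') auto
    have "adj u v" "adj u v'" using d(1,2) uv by (simp_all add: in_darts)
    moreover have "inj_on (rot u) (nbrs adj u)" using rot_nbrs adjD \<open>adj u v\<close> bij_betw_def by blast
    ultimately have "v = v'" using uv(3) unfolding inj_on_def nbrs_def by simp
    then show "d = d'" using uv by simp
  qed
qed

lemma comb_map_darts:
  assumes "perm_on \<sigma> (darts adj)"
  shows "comb_map (darts adj) \<sigma> prod.swap dart_edge"
proof
  fix x y assume x: "x \<in> darts adj"
  show "prod.swap x \<in> darts adj" using swap_dart[OF x] .
  show "prod.swap (prod.swap x) = x" by simp
  show "prod.swap x \<noteq> x" using x adjD unfolding darts_def by (cases x) auto
  show "dart_edge (prod.swap x) = dart_edge x" unfolding dart_edge_def by auto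
  assume "y \<in> darts adj" "dart_edge x = dart_edge y"
  then show "y = x \<or> y = prod.swap x"
    unfolding dart_edge_def by (cases x, cases y) (auto simp: doubleton_eq_iff)
qed (rule assms)

lemma perm_on_face_step: "perm_on (face_step rot) (darts adj)"
  unfolding face_step_eq
  using comb_map.perm_on_flip[OF comb_map_darts[OF perm_on_rotation], of "dart_edge ` darts adj"]
  by (rule perm_on_cong[rotated]) (simp add: comb_map.flip_all[OF comb_map_darts[OF perm_on_rotation]])

lemma orbit_rotation: "adj u v \<Longrightarrow> orbit (rot_step rot) (u, v) = {u} \<times> nbrs adj u"
  unfolding orbit_def rot_step_funpow nbrs_def using adj_rot_funpow rot_reaches by fastforce

lemma same_tail_in_rotation_orbit:
  assumes "d \<in> darts adj" and "d' \<in> darts adj" and "fst d' = fst d"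
  shows "d' \<in> orbit (rot_step rot) d"
proof -
  obtain u v where d: "d = (u, v)" by (cases d)
  have "d' \<in> {u} \<times> nbrs adj u" using assms d by (cases d') (simp add: in_darts nbrs_def)
  then show ?thesis using orbit_rotation[of u v] assms(1) d by (simp add: in_darts)
qed

lemma card_orbits_rotation: "card (orbits (rot_step rot) (darts adj)) = card V"
proof -
  have "orbits (rot_step rot) (darts adj) = (\<lambda>u. {u} \<times> nbrs adj u) ` V"
  proof
    show "orbits (rot_step rot) (darts adj) \<subseteq> (\<lambda>u. {u} \<times> nbrs adj u) ` V"
      unfolding orbits_def darts_def using orbit_rotation adjD by auto
    show "(\<lambda>u. {u} \<times> nbrs adj u) ` V \<subseteq> orbits (rot_step rot) (darts adj)"
    proof
      fix C assume "C \<in> (\<lambda>u. {u} \<times> nbrs adj u) ` V"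
      then obtain u v where "C = {u} \<times> nbrs adj u" "adj u v"
        using exists_neighbour_avoiding by blast
      then show "C \<in> orbits (rot_step rot) (darts adj)"
        unfolding orbits_def using orbit_rotation in_darts by (metis image_eqI)
    qed
  qed
  moreover have "inj_on (\<lambda>u. {u} \<times> nbrs adj u) V"
    using exists_neighbour_avoiding unfolding inj_on_def nbrs_def by blast
  ultimately show ?thesis by (simp add: card_image)
qed

lemma euler_orbits:
  "card (orbits (rot_step rot) (darts adj)) + card (orbits (face_step rot) (darts adj))
     = card (dart_edge ` darts adj) + 2"
  using euler unfolding card_orbits_rotation faces_eq graph_edges_eq by linarith

text \<open>Away from w the twisted rotation agrees with rot, and V - {w} is still connected.\<close>

lemma twisted_rotation_closed_reach:
  assumes w: "w \<in> V" and e: "fst e1 = w" "fst e2 = w" and B: "B \<subseteq> darts adj"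
    and closed: "(rot_step rot \<circ> transpose e1 e2) ` B \<subseteq> B" "prod.swap ` B \<subseteq> B"
    and d0: "(u0, v0) \<in> B" "u0 \<noteq> w" and uv: "u \<in> V - {w}" "adj u v"
  shows "(u, v) \<in> B"
proof -
  let ?\<sigma> = "rot_step rot \<circ> transpose e1 e2"
  have fixes_off_w: "transpose e1 e2 (u, v) = (u, v)" if "u \<noteq> w" for u v
    using that e by (intro transpose_apply_other) auto
  have \<sigma>_funpow: "(?\<sigma> ^^ n) (u, v) = (u, (rot u ^^ n) v)" if "u \<noteq> w" for u v n
    using that by (induction n) (simp_all add: fixes_off_w rot_step_def)
  have \<sigma>_funpow_in: "(?\<sigma> ^^ n) d \<in> B" if "d \<in> B" for d n
    using that closed(1) by (induction n) auto
  have all_at_u: "(u, v') \<in> B" if u: "u \<noteq> w" and uv: "(u, v) \<in> B" and v': "adj u v'" for u v v'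
  proof -
    have "adj u v" using uv B in_darts by blast
    then obtain n where "(rot u ^^ n) v = v'" using rot_reaches v' by blast
    then show ?thesis using \<sigma>_funpow_in[OF uv, of n] \<sigma>_funpow[OF u] by simp
  qed
  have "u0 \<in> V - {w}" using d0 B adjD in_darts by blast
  then have "(\<lambda>y z. adj y z \<and> y \<in> V - {w} \<and> z \<in> V - {w})\<^sup>*\<^sup>* u0 u"
    using connected_avoiding[OF w _ uv(1)] by blast
  then show ?thesis using uv(2)
  proof (induction arbitrary: v rule: rtranclp_induct)
    case base
    then show ?case using all_at_u d0 by blast
  next
    case (step y z)
    then have "(y, z) \<in> B" by blast
    then have "(z, y) \<in> B" using closed(2) by force
    then show ?case using all_at_u step by blast
  qed
qed

lemma twisted_rotation_closed_eq_darts: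
  assumes w: "w \<in> V" and e: "fst e1 = w" "fst e2 = w"
    and B: "B \<subseteq> darts adj" "B \<noteq> {}"
    and closed: "(rot_step rot \<circ> transpose e1 e2) ` B \<subseteq> B" "prod.swap ` B \<subseteq> B"
  shows "B = darts adj"
proof -
  obtain u0 v0 where d0: "(u0, v0) \<in> B" "u0 \<noteq> w"
  proof -
    obtain u v where uv: "(u, v) \<in> B" using B(2) by auto
    then have "(v, u) \<in> B" "u \<noteq> v" using closed(2) B(1) adjD in_darts by force+
    then show ?thesis using that uv by (cases "u = w") auto
  qed
  note reach = twisted_rotation_closed_reach[OF w e B(1) closed d0]
  have "darts adj \<subseteq> B"
  proof
    fix d assume "d \<in> darts adj"
    then obtain u v where d: "d = (u, v)" "adj u v" by (cases d) (simp add: in_darts)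
    show "d \<in> B"
    proof (cases "u = w")
      case False
      then show ?thesis using reach d adjD by blast
    next
      case True
      then have "(v, u) \<in> B" using reach d adjD by blast
      then show ?thesis using closed(2) d by force
    qed
  qed
  then show ?thesis using B(1) by blast
qed

lemma twisted_genus_bound:
  assumes e: "e1 \<in> darts adj" "e2 \<in> darts adj" "fst e1 = fst e2"
  shows "card (orbits (rot_step rot \<circ> transpose e1 e2) (darts adj))
           + card (orbits (rot_step rot \<circ> transpose e1 e2 \<circ> prod.swap) (darts adj))
         \<le> card (dart_edge ` darts adj) + 2"
proof -
  let ?\<sigma> = "rot_step rot \<circ> transpose e1 e2"
  have "perm_on ?\<sigma> (darts adj)" by (rule perm_on_comp_transpose[OF perm_on_rotation e(1,2)])
  then interpret twisted: comb_map "darts adj" ?\<sigma> prod.swap dart_edge by (rule comb_map_darts)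
  show ?thesis
  proof (rule twisted.genus_bound)
    fix B assume "B \<subseteq> darts adj" "B \<noteq> {}" "?\<sigma> ` B \<subseteq> B" "prod.swap ` B \<subseteq> B"
    then show "B = darts adj"
      using twisted_rotation_closed_eq_darts[of "fst e1" e1 e2 B] e adjD in_darts by (metis prod.collapse)
  qed
qed

lemma face_subset_darts: "f \<in> faces adj rot \<Longrightarrow> f \<subseteq> darts adj"
  unfolding faces_eq orbits_def using orbit_subset[OF perm_on_face_step] by blast

lemma face_eq_orbit: "f \<in> faces adj rot \<Longrightarrow> d \<in> f \<Longrightarrow> orbit (face_step rot) d = f"
  unfolding faces_eq orbits_def using orbit_eq[OF perm_on_face_step] by blast

lemma orbit_in_faces: "d \<in> darts adj \<Longrightarrow> orbit (face_step rot) d \<in> faces adj rot"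
  unfolding faces_eq orbits_def by blast

lemma face_inj_on_fst:
  assumes f: "f \<in> faces adj rot"
  shows "inj_on fst f"
proof (rule inj_onI, rule ccontr)
  fix d1 d2 assume d: "d1 \<in> f" "d2 \<in> f" "fst d1 = fst d2" "d1 \<noteq> d2"
  let ?\<phi> = "face_step rot" and ?\<sigma> = "rot_step rot"
  have d_darts: "d1 \<in> darts adj" "d2 \<in> darts adj" using d face_subset_darts[OF f] by auto
  obtain q1 q2 where q1: "q1 \<in> f" "?\<phi> q1 = d1" and q2: "q2 \<in> f" "?\<phi> q2 = d2"
    using orbit_pred[OF perm_on_face_step d_darts(1)] orbit_pred[OF perm_on_face_step d_darts(2)]
      face_eq_orbit[OF f d(1)] face_eq_orbit[OF f d(2)] by metis
  define e1 e2 where "e1 = prod.swap q1" and "e2 = prod.swap q2"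
  have q_darts: "q1 \<in> darts adj" "q2 \<in> darts adj" using q1 q2 face_subset_darts[OF f] by auto
  then have e_darts: "e1 \<in> darts adj" "e2 \<in> darts adj" unfolding e1_def e2_def by (simp_all add: swap_dart)
  have "?\<sigma> e1 = d1" "?\<sigma> e2 = d2" using q1(2) q2(2) by (simp_all add: e1_def e2_def face_step_eq)
  then have fst_e: "fst e2 = fst e1" using d(3) by (auto simp: rot_step_def)
  have "q1 \<noteq> q2" using q1(2) q2(2) d(4) by blast
  then have e12: "e1 \<noteq> e2" unfolding e1_def e2_def by (metis swap_swap)
  have "card (orbits (?\<sigma> \<circ> transpose e1 e2) (darts adj)) = card (orbits ?\<sigma> (darts adj)) + 1"
    using card_orbits_split[OF perm_on_rotation e_darts(1) e12]
      same_tail_in_rotation_orbit[OF e_darts fst_e] by blast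
  moreover have "orbits (?\<sigma> \<circ> transpose e1 e2 \<circ> prod.swap) (darts adj)
      = orbits (?\<phi> \<circ> transpose q1 q2) (darts adj)"
  proof (rule orbits_cong[symmetric])
    show "perm_on (?\<phi> \<circ> transpose q1 q2) (darts adj)"
      by (rule perm_on_comp_transpose[OF perm_on_face_step q_darts])
    fix x
    have "prod.swap (transpose q1 q2 x) = transpose e1 e2 (prod.swap x)"
      unfolding e1_def e2_def transpose_def by (simp add: inj_eq[OF inj_swap])
    then show "(?\<phi> \<circ> transpose q1 q2) x = (?\<sigma> \<circ> transpose e1 e2 \<circ> prod.swap) x"
      by (simp add: face_step_eq)
  qed
  moreover have "card (orbits (?\<phi> \<circ> transpose q1 q2) (darts adj)) = card (orbits ?\<phi> (darts adj)) + 1"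
    using card_orbits_split[OF perm_on_face_step q_darts(1) \<open>q1 \<noteq> q2\<close>]
      face_eq_orbit[OF f q1(1)] q2(1) by simp
  ultimately show False
    using twisted_genus_bound[OF e_darts fst_e[symmetric]] euler_orbits by simp
qed

lemma face_step_in_face: "f \<in> faces adj rot \<Longrightarrow> d \<in> f \<Longrightarrow> face_step rot d \<in> f"
  using face_eq_orbit orbit_closed[OF orbit_self] by metis

lemma face_verts_dart:
  assumes "f \<in> faces adj rot" and "(u, v) \<in> f"
  shows "u \<in> face_verts f" and "v \<in> face_verts f"
proof -
  show "u \<in> face_verts f" using assms(2) unfolding face_verts_def by force
  have "(v, rot v u) \<in> f" using face_step_in_face[OF assms] by (simp add: face_step_def)
  then show "v \<in> face_verts f" unfolding face_verts_def by force
qed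

lemma face_no_antiparallel:
  assumes f: "f \<in> faces adj rot" and uv: "(u, v) \<in> f"
  shows "(v, u) \<notin> f"
proof
  assume "(v, u) \<in> f"
  then have "(u, rot u v) \<in> f" using face_step_in_face[OF f] by (force simp: face_step_def)
  then have "rot u v = v" using inj_onD[OF face_inj_on_fst[OF f], of "(u, rot u v)" "(u, v)"] uv by simp
  moreover have "adj u v" using uv face_subset_darts[OF f] in_darts by blast
  ultimately show False using rot_neq by blast
qed

lemma card_face_verts: "f \<in> faces adj rot \<Longrightarrow> card (face_verts f) = card f"
  unfolding face_verts_def by (rule card_image[OF face_inj_on_fst])

lemma face_len_eq_card:
  assumes f: "f \<in> faces adj rot"
  shows "face_len f = card f"
proof -
  interpret comb_map "darts adj" "rot_step rot" prod.swap dart_edge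
    by (rule comb_map_darts[OF perm_on_rotation])
  have "inj_on dart_edge f"
  proof (rule inj_onI)
    fix x y assume "x \<in> f" "y \<in> f" "dart_edge x = dart_edge y"
    moreover have "prod.swap x \<notin> f"
      using face_no_antiparallel[OF f, of "fst x" "snd x"] \<open>x \<in> f\<close> by (cases x) simp
    ultimately show "x = y" using edge_eqD face_subset_darts[OF f] by (metis subsetD)
  qed
  then show ?thesis unfolding face_len_def face_edges_eq by (rule card_image)
qed

lemma sum_card_faces: "(\<Sum>f\<in>faces adj rot. card f) = card (darts adj)"
proof -
  have P: "partition_on (darts adj) (faces adj rot)"
    unfolding faces_eq by (rule orbits_partition[OF perm_on_face_step])
  have "card (\<Union> (faces adj rot)) = (\<Sum>f\<in>faces adj rot. card f)"
    using partition_onD2[OF P] face_subset_darts finite_darts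
    by (intro card_Union_disjoint) (auto intro: finite_subset)
  then show ?thesis using partition_onD1[OF P] by simp
qed

lemma Bval_unit_weights:
  assumes a1: "\<forall>p\<in>bounded_faces adj rot pinf. a p = 1"
  shows "Bval V adj rot pinf a b
           = 2 * (\<Sum>v\<in>V. b v) + 2 * int (card V) - 2 - int (card (face_verts pinf))"
proof -
  interpret comb_map "darts adj" "rot_step rot" prod.swap dart_edge
    by (rule comb_map_darts[OF perm_on_rotation])
  have fin: "finite (faces adj rot)" unfolding faces_eq by (rule finite_orbits[OF perm_on_face_step])
  have "(\<Sum>p\<in>bounded_faces adj rot pinf. (int (face_len p) - 2) * a p)
      = (\<Sum>p\<in>faces adj rot - {pinf}. int (card p) - 2)"
    unfolding bounded_faces_def using a1 face_len_eq_card by (intro sum.cong) (auto simp: bounded_faces_def)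
  also have "\<dots> = (\<Sum>p\<in>faces adj rot. int (card p) - 2) - (int (card pinf) - 2)"
    using sum.remove[OF fin pinf_face, of "\<lambda>p. int (card p) - 2"] by simp
  also have "(\<Sum>p\<in>faces adj rot. int (card p) - 2) = int (card (darts adj)) - 2 * int (card (faces adj rot))"
    using sum_card_faces by (simp add: sum_subtractf of_nat_sum[symmetric])
  finally show ?thesis
    using euler card_eq_twice_edges card_face_verts[OF pinf_face] unfolding Bval_def graph_edges_eq
    by simp
qed

lemma face_verts_subset: "f \<in> faces adj rot \<Longrightarrow> face_verts f \<subseteq> V"
  unfolding face_verts_def using face_subset_darts in_darts adjD by fastforce

lemma bounded_face_at_vertex:
  assumes w: "w \<in> V"
  obtains f where "f \<in> bounded_faces adj rot pinf" and "w \<in> face_verts f"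
proof -
  obtain v where wv: "adj w v" using exists_neighbour_avoiding[OF w w] by blast
  then have darts: "(w, v) \<in> darts adj" "(v, w) \<in> darts adj" using adjD in_darts by auto
  have "(w, v) \<notin> pinf \<or> (v, w) \<notin> pinf" using face_no_antiparallel[OF pinf_face] by blast
  then obtain d where d: "d \<in> {(w, v), (v, w)}" "d \<notin> pinf" by blast
  let ?f = "orbit (face_step rot) d"
  have f: "?f \<in> faces adj rot" using d(1) darts orbit_in_faces by blast
  have "?f \<noteq> pinf" using d(2) orbit_self by metis
  moreover have "w \<in> face_verts ?f" using face_verts_dart[OF f] d(1) orbit_self by (metis insertE singletonD)
  ultimately show ?thesis using that f unfolding bounded_faces_def by blast
qed

lemma face_of_in_faces: "d \<in> darts adj \<Longrightarrow> face_of rot d \<in> faces adj rot"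
  unfolding face_of_eq by (rule orbit_in_faces)

lemma in_face_of: "d \<in> face_of rot d"
  unfolding face_of_eq by (rule orbit_self)

lemma face_of_eq_face: "f \<in> faces adj rot \<Longrightarrow> d \<in> f \<Longrightarrow> face_of rot d = f"
  unfolding face_of_eq by (rule face_eq_orbit)

lemma face_of_eq_pinf_iff: "d \<in> darts adj \<Longrightarrow> face_of rot d = pinf \<longleftrightarrow> d \<in> pinf"
  using face_of_eq_face[OF pinf_face, of d] in_face_of[of d] by auto

lemma face_of_face_step: "d \<in> darts adj \<Longrightarrow> face_of rot (face_step rot d) = face_of rot d"
  using face_of_eq_face[OF face_of_in_faces] face_step_in_face[OF face_of_in_faces in_face_of] by metis

lemma face_of_rot_step: "d \<in> darts adj \<Longrightarrow> face_of rot (rot_step rot d) = face_of rot (prod.swap d)"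
  using face_of_face_step[OF swap_dart] by (simp add: face_step_eq)

lemma bface_le: "f \<in> faces adj rot \<Longrightarrow> v \<in> face_verts f \<Longrightarrow> bface b f \<le> b v"
  unfolding bface_def using face_verts_subset finite_V finite_subset by (metis Min_le finite_imageI imageI)

lemma bounded_face_dart:
  assumes "p \<in> bounded_faces adj rot pinf"
  obtains d where "d \<in> darts adj" and "d \<notin> pinf" and "p = face_of rot d"
proof -
  obtain d where d: "d \<in> darts adj" "p = face_of rot d"
    using assms unfolding bounded_faces_def faces_eq orbits_def face_of_eq by blast
  then have "d \<notin> pinf" using assms face_of_eq_pinf_iff unfolding bounded_faces_def by blast
  with d show ?thesis using that by blast
qed

lemma adjacent_share_bounded_face:
  assumes "adj u v"
  obtains d d' where "d \<in> darts adj" "fst d = u" "d \<notin> pinf"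
    and "d' \<in> darts adj" "fst d' = v" "face_of rot d' = face_of rot d"
proof -
  have uv: "(u, v) \<in> darts adj" "(v, u) \<in> darts adj" using assms adjD in_darts by auto
  have fs: "face_step rot (u, v) = (v, rot v u)" "face_step rot (v, u) = (u, rot u v)"
    by (simp_all add: face_step_def)
  have "(u, v) \<notin> pinf \<or> (v, u) \<notin> pinf" using face_no_antiparallel[OF pinf_face] by blast
  then show ?thesis
  proof
    assume "(u, v) \<notin> pinf"
    then show ?thesis
      using that[of "(u, v)" "face_step rot (u, v)"] uv(1) face_of_face_step[OF uv(1)] fs(1)
        perm_on_face_step unfolding perm_on_def by auto
  next
    assume vu: "(v, u) \<notin> pinf"
    have "face_step rot (v, u) \<notin> pinf"
      using vu face_of_face_step[OF uv(2)] face_of_eq_pinf_iff uv(2) perm_on_face_step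
      unfolding perm_on_def by (metis image_subset_iff)
    then show ?thesis
      using that[of "face_step rot (v, u)" "(v, u)"] uv(2) face_of_face_step[OF uv(2)] fs(2)
        perm_on_face_step unfolding perm_on_def by auto
  qed
qed

end

section \<open>States satisfying the interior edge condition\<close>

lemma min_of_zero_product:
  fixes x y c :: int
  assumes "c \<le> x" and "c \<le> y" and "(x - c) * (y - c) = 0"
  shows "c = min x y"
  using assms by (auto simp: min_def)

locale interior_edge_min = plane_embedding +
  fixes b :: "'v \<Rightarrow> int"
  assumes interior_edge_min: "\<forall>p'\<in>bounded_faces adj rot pinf. \<forall>v1 v2.
    {v1, v2} \<in> face_edges p' \<and> {v1, v2} \<notin> face_edges pinf \<longrightarrow>
    (b v1 - bface b p') * (b v2 - bface b p') = 0"
begin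

lemma bface_interior_dart:
  assumes d: "(u, v) \<in> darts adj" and "(u, v) \<notin> pinf" and "(v, u) \<notin> pinf"
  shows "bface b (face_of rot (u, v)) = min (b u) (b v)"
proof -
  let ?p = "face_of rot (u, v)"
  have p: "?p \<in> faces adj rot" and uv: "(u, v) \<in> ?p"
    using face_of_in_faces[OF d] in_face_of by auto
  have "?p \<in> bounded_faces adj rot pinf"
    using p face_of_eq_pinf_iff[OF d] assms(2) unfolding bounded_faces_def by simp
  moreover have "{u, v} \<in> face_edges ?p" using uv unfolding face_edges_def by blast
  moreover have "{u, v} \<notin> face_edges pinf"
    using assms(2,3) unfolding face_edges_def by (auto simp: doubleton_eq_iff)
  ultimately have "(b u - bface b ?p) * (b v - bface b ?p) = 0" using interior_edge_min by blast
  then show ?thesis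
    using min_of_zero_product bface_le[OF p _, of _ b] face_verts_dart[OF p uv] by blast
qed

lemma bface_interior_edge:
  assumes d: "d \<in> darts adj" and "d \<notin> pinf" and "prod.swap d \<notin> pinf"
  shows "bface b (face_of rot d) = bface b (face_of rot (prod.swap d))"
proof -
  obtain u v where uv: "d = (u, v)" by (cases d)
  then have "(v, u) \<in> darts adj" using swap_dart[OF d] by simp
  then show ?thesis
    using bface_interior_dart[of u v] bface_interior_dart[of v u] assms uv by (simp add: min.commute)
qed

lemma bface_rotation_run:
  assumes x: "x \<in> darts adj"
  shows "(\<forall>i\<le>n. (rot_step rot ^^ i) x \<notin> pinf) \<Longrightarrow>
    bface b (face_of rot ((rot_step rot ^^ n) x)) = bface b (face_of rot x)"
proof (induction n)
  case (Suc n)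
  define y where "y = (rot_step rot ^^ n) x"
  have y: "y \<in> darts adj" unfolding y_def by (rule perm_on_funpow_in[OF perm_on_rotation x])
  have "y \<notin> pinf" using Suc.prems unfolding y_def by simp
  moreover have "rot_step rot y \<notin> pinf" using Suc.prems[rule_format, of "Suc n"] unfolding y_def by simp
  moreover have "rot_step rot y \<in> darts adj"
    using y perm_on_rotation unfolding perm_on_def by blast
  ultimately have "prod.swap y \<notin> pinf"
    using face_of_rot_step[OF y] face_of_eq_pinf_iff swap_dart[OF y] by metis
  then have "bface b (face_of rot (rot_step rot y)) = bface b (face_of rot y)"
    using bface_interior_edge[OF y \<open>y \<notin> pinf\<close>] face_of_rot_step[OF y] by simp
  then show ?case using Suc unfolding y_def by simp
qed simp

text \<open>
  The hypothesis on ds says that the only dart of the outer face at this vertex, if any, is the one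
  just before ds in the rotation; so turning from ds towards dk never crosses the outer face.
\<close>

lemma bface_from_entry:
  assumes ds: "ds \<in> darts adj" and dk: "dk \<in> darts adj" "fst dk = fst ds" "dk \<notin> pinf"
    and entry: "\<And>i. (rot_step rot ^^ i) ds \<in> pinf \<Longrightarrow> (rot_step rot ^^ Suc i) ds = ds"
  shows "bface b (face_of rot dk) = bface b (face_of rot ds)"
proof -
  have "dk \<in> orbit (rot_step rot) ds" by (rule same_tail_in_rotation_orbit[OF ds dk(1,2)])
  then obtain m where "(rot_step rot ^^ m) ds = dk" unfolding orbit_def by blast
  define n where "n = (LEAST n. (rot_step rot ^^ n) ds = dk)"
  have n: "(rot_step rot ^^ n) ds = dk"
    unfolding n_def by (rule LeastI[of "\<lambda>n. (rot_step rot ^^ n) ds = dk", OF \<open>_ = dk\<close>])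
  have "(rot_step rot ^^ i) ds \<notin> pinf" if "i \<le> n" for i
  proof
    assume i: "(rot_step rot ^^ i) ds \<in> pinf"
    then have "i \<noteq> n" using n dk(3) by auto
    then have "n - Suc i + Suc i = n" using that by simp
    then have "(rot_step rot ^^ (n - Suc i)) ((rot_step rot ^^ Suc i) ds) = dk"
      unfolding funpow_apply_add using n by simp
    then have "(rot_step rot ^^ (n - Suc i)) ds = dk" using entry[OF i] by simp
    then have "n \<le> n - Suc i" unfolding n_def by (rule Least_le)
    then show False using that \<open>i \<noteq> n\<close> by simp
  qed
  then show ?thesis using bface_rotation_run[OF ds, of n] n by simp
qed

lemma bface_at_vertex:
  assumes d: "d1 \<in> darts adj" "d2 \<in> darts adj" "fst d1 = fst d2" "d1 \<notin> pinf" "d2 \<notin> pinf"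
  shows "bface b (face_of rot d1) = bface b (face_of rot d2)"
proof (cases "\<exists>q\<in>pinf. fst q = fst d1")
  case True
  then obtain q where q: "q \<in> pinf" "fst q = fst d1" by blast
  have qd: "q \<in> darts adj" using q(1) face_subset_darts[OF pinf_face] by blast
  define ds where "ds = rot_step rot q"
  have ds: "ds \<in> darts adj" "fst ds = fst d1"
    using qd q(2) perm_on_rotation unfolding ds_def perm_on_def by (auto simp: rot_step_def)
  have "(rot_step rot ^^ Suc i) ds = ds" if "(rot_step rot ^^ i) ds \<in> pinf" for i
  proof -
    have "(rot_step rot ^^ i) ds = q"
      using inj_onD[OF face_inj_on_fst[OF pinf_face] _ that q(1)] q(2) ds(2) fst_rot_step_funpow by metis
    then show ?thesis by (simp add: ds_def)
  qed
  then show ?thesis using bface_from_entry[OF ds(1)] d ds(2) by metis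
next
  case False
  then have "(rot_step rot ^^ Suc i) d1 = d1" if "(rot_step rot ^^ i) d1 \<in> pinf" for i
    using that fst_rot_step_funpow by metis
  then show ?thesis using bface_from_entry[OF d(1) d(2)] d(3,5) by metis
qed

lemma bface_bounded_faces_eq:
  assumes p: "p \<in> bounded_faces adj rot pinf" and p': "p' \<in> bounded_faces adj rot pinf"
  shows "bface b p' = bface b p"
proof -
  obtain d0 where d0: "d0 \<in> darts adj" "d0 \<notin> pinf" "p = face_of rot d0"
    using bounded_face_dart[OF p] .
  define Q where "Q u \<longleftrightarrow> (\<forall>d\<in>darts adj. fst d = u \<longrightarrow> d \<notin> pinf \<longrightarrow> bface b (face_of rot d) = bface b p)" for u
  have Q0: "Q (fst d0)" unfolding Q_def using bface_at_vertex d0 by metis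
  have Q_step: "Q v" if Qu: "Q u" and uv: "adj u v" for u v
  proof -
    obtain d d' where d: "d \<in> darts adj" "fst d = u" "d \<notin> pinf"
      and d': "d' \<in> darts adj" "fst d' = v" "face_of rot d' = face_of rot d"
      using adjacent_share_bounded_face[OF uv] .
    have "d' \<notin> pinf" using d d' face_of_eq_pinf_iff by metis
    then show ?thesis using Qu d d' bface_at_vertex unfolding Q_def by metis
  qed
  have "Q w" if "w \<in> V" for w
  proof -
    have "fst d0 \<in> V" using d0(1) adjD by (cases d0) (auto simp: in_darts)
    then have "(\<lambda>x y. adj x y \<and> x \<in> V \<and> y \<in> V)\<^sup>*\<^sup>* (fst d0) w"
      using connected_V that unfolding connected_on_def by blast
    then show ?thesis by (induction rule: rtranclp_induct) (auto intro: Q0 Q_step)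
  qed
  moreover obtain d where d: "d \<in> darts adj" "d \<notin> pinf" "p' = face_of rot d"
    using bounded_face_dart[OF p'] .
  moreover have "fst d \<in> V" using d(1) adjD by (cases d) (auto simp: in_darts)
  ultimately show ?thesis unfolding Q_def by blast
qed

lemma bface_bounded_faces_minus_one:
  assumes c1: "\<exists>p\<in>bounded_faces adj rot pinf. \<exists>v v'.
    {v, v'} \<in> face_edges p \<and> {v, v'} \<in> face_edges pinf \<and>
    b v = 0 \<and> b v' = 0 \<and> (b v - bface b p) * (b v' - bface b p) = 1"
    and p': "p' \<in> bounded_faces adj rot pinf"
  shows "bface b p' = -1"
proof -
  obtain p v v' where p: "p \<in> bounded_faces adj rot pinf" and e: "{v, v'} \<in> face_edges p"
    and b0: "b v = 0" "b v' = 0" and sq: "(b v - bface b p) * (b v' - bface b p) = 1"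
    using c1 by blast
  have pf: "p \<in> faces adj rot" using p unfolding bounded_faces_def by blast
  obtain x y where xy: "{v, v'} = {x, y}" "(x, y) \<in> p" using e unfolding face_edges_def by blast
  then have "v \<in> face_verts p" using face_verts_dart[OF pf xy(2)] by (auto simp: doubleton_eq_iff)
  then have "bface b p \<le> 0" using bface_le[OF pf, of v b] b0 by simp
  moreover have "bface b p * bface b p = 1" using sq b0 by simp
  ultimately have "bface b p = -1" using square_eq_1_iff[of "bface b p"] by auto
  then show ?thesis using bface_bounded_faces_eq[OF p p'] by simp
qed

end

lemma sum_ge_minus_card:
  fixes b :: "'a \<Rightarrow> int"
  assumes "finite V" and "W \<subseteq> V" and "\<forall>w\<in>W. b w \<ge> 0" and "\<forall>w\<in>V - W. b w \<ge> -1"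
  shows "(\<Sum>w\<in>V. b w) \<ge> - int (card (V - W))"
    and "(\<Sum>w\<in>V. b w) = - int (card (V - W)) \<longleftrightarrow> (\<forall>w\<in>W. b w = 0) \<and> (\<forall>w\<in>V - W. b w = -1)"
proof -
  define lb where "lb w = (if w \<in> W then 0 else - 1 :: int)" for w
  have nonneg: "\<forall>w\<in>V. b w - lb w \<ge> 0" using assms(3,4) unfolding lb_def by auto
  have "(\<Sum>w\<in>V. lb w) = - int (card (V - W))"
    using sum.subset_diff[OF assms(2,1), of lb] unfolding lb_def by simp
  then have sum_eq: "(\<Sum>w\<in>V. b w) + int (card (V - W)) = (\<Sum>w\<in>V. b w - lb w)"
    by (simp add: sum_subtractf)
  moreover have "(\<Sum>w\<in>V. b w - lb w) \<ge> 0" by (rule sum_nonneg) (use nonneg in blast)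
  ultimately show "(\<Sum>w\<in>V. b w) \<ge> - int (card (V - W))" by linarith
  have "(\<Sum>w\<in>V. b w - lb w) = 0 \<longleftrightarrow> (\<forall>w\<in>V. b w - lb w = 0)"
    by (rule sum_nonneg_eq_0_iff[OF assms(1)]) (use nonneg in blast)
  then show "(\<Sum>w\<in>V. b w) = - int (card (V - W)) \<longleftrightarrow> (\<forall>w\<in>W. b w = 0) \<and> (\<forall>w\<in>V - W. b w = -1)"
    using sum_eq assms(2) unfolding lb_def by (auto split: if_splits)
qed

theorem lemma4p2:
  fixes V :: "'v set" and adj :: "'v \<Rightarrow> 'v \<Rightarrow> bool" and rot :: "'v \<Rightarrow> 'v \<Rightarrow> 'v"
    and pinf :: "('v \<times> 'v) set"
    and a :: "('v \<times> 'v) set \<Rightarrow> int" and b :: "'v \<Rightarrow> int"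
  assumes G: "plane_graph V adj rot pinf"
    and adm: "admissible adj rot pinf a b"
    and c1: "\<exists>p\<in>bounded_faces adj rot pinf. \<exists>v v'.
               {v, v'} \<in> face_edges p \<and> {v, v'} \<in> face_edges pinf \<and>
               b v = 0 \<and> b v' = 0 \<and> (b v - bface b p) * (b v' - bface b p) = 1"
    and c2: "\<forall>p'\<in>bounded_faces adj rot pinf. a p' + bface b p' = 0"
    and c3: "\<forall>p'\<in>bounded_faces adj rot pinf. \<forall>v1 v2.
               {v1, v2} \<in> face_edges p' \<and> {v1, v2} \<notin> face_edges pinf \<longrightarrow>
               (b v1 - bface b p') * (b v2 - bface b p') = 0"
  shows "(\<forall>w\<in>V. b w \<ge> -1) \<and>
         (\<forall>p'\<in>bounded_faces adj rot pinf. a p' = 1) \<and>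
         Bval V adj rot pinf a b \<ge> int (card (face_verts pinf)) - 2 \<and>
         (Bval V adj rot pinf a b = int (card (face_verts pinf)) - 2 \<longleftrightarrow>
            (\<forall>w\<in>face_verts pinf. b w = 0) \<and>
            (\<forall>w\<in>V - face_verts pinf. b w = -1) \<and>
            (\<forall>p'\<in>bounded_faces adj rot pinf. a p' = 1))"
proof -
  interpret interior_edge_min V adj rot pinf b
    using G c3 by unfold_locales
  have bface: "bface b p = -1" if "p \<in> bounded_faces adj rot pinf" for p
    using bface_bounded_faces_minus_one[OF c1 that] .
  have a1: "\<forall>p'\<in>bounded_faces adj rot pinf. a p' = 1" using c2 bface by force
  have b_ge: "\<forall>w\<in>V. b w \<ge> -1"
  proof
    fix w assume "w \<in> V"
    then obtain p where p: "p \<in> bounded_faces adj rot pinf" "w \<in> face_verts p"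
      by (rule bounded_face_at_vertex)
    then show "b w \<ge> -1" using bface[OF p(1)] bface_le[of p w b] unfolding bounded_faces_def by simp
  qed
  let ?W = "face_verts pinf"
  have W: "?W \<subseteq> V" by (rule face_verts_subset[OF pinf_face])
  have outer: "\<forall>w\<in>?W. b w \<ge> 0" using adm unfolding admissible_def by blast
  have "\<forall>w\<in>V - ?W. b w \<ge> -1" using b_ge by blast
  note sum_bound = sum_ge_minus_card[OF finite_V W outer this]
  have "int (card (V - ?W)) = int (card V) - int (card ?W)"
    using card_Diff_subset[OF finite_subset[OF W finite_V] W] card_mono[OF finite_V W] by simp
  then have "Bval V adj rot pinf a b - (int (card ?W) - 2) = 2 * ((\<Sum>w\<in>V. b w) + int (card (V - ?W)))"
    using Bval_unit_weights[OF a1] by simp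
  then show ?thesis using a1 b_ge sum_bound by auto
qed

end
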